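(* Let $\sigma=\sigma_1\cdots\sigma_k\in\mathfrak S_k$ be a consecutive pattern ($k\ge1$). Let $12\text{-}\sigma$ denote the generalized pattern $12\text{-}(\sigma_1+2)\cdots(\sigma_k+2)$ and $21\text{-}\sigma$ the generalized pattern $21\text{-}(\sigma_1+2)\cdots(\sigma_k+2)$. Then $A_{12\text{-}\sigma}(z)=A_{21\text{-}\sigma}(z)$.
   Context: $\mathfrak S_n$ is the symmetric group on $\{1,\dots,n\}$, permutations in one-line notation. A generalized pattern of length $m$ is a permutation $\sigma_1\cdots\sigma_m\in\mathfrak S_m$ with, between each pair of adjacent entries, either a dash "-" or nothing. A permutation $\pi\in\mathfrak S_n$ contains it if there are indices $i_1<\dots<i_m$ with $i_{j+1}=i_j+1$ whenever there is no dash between $\sigma_j$ and $\sigma_{j+1}$, and with $\pi_{i_a}<\pi_{i_b}$ iff $\sigma_a<\sigma_b$ for all $a,b$; otherwise $\pi$ avoids it. A consecutive pattern has no dashes. $\alpha_n(\sigma)$ is the number of permutations in $\mathfrak S_n$ avoiding $\sigma$ ($\alpha_0=1$) and $A_\sigma(z)=\sum_{n\ge0}\alpha_n(\sigma)z^n/n!$. *)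

theory Defs
  imports "HOL-Computational_Algebra.Formal_Power_Series"
begin

definition perms :: "nat \<Rightarrow> nat list set" where
  "perms n = {xs. distinct xs \<and> set xs = {1..n}}"

text \<open>A generalized pattern is a pair (sigma, D): sigma is a permutation of {1..m}
  in one-line notation and D is the set of (0-based) positions j < m-1 such that a
  dash stands between sigma!j and sigma!(j+1). No dash means the entries must be adjacent.\<close>
type_synonym gpattern = "nat list \<times> nat set"

definition contains :: "nat list \<Rightarrow> gpattern \<Rightarrow> bool" where
  "contains w p = (let sig = fst p; D = snd p; m = length sig in
     \<exists>idx :: nat \<Rightarrow> nat.
        (\<forall>j. j + 1 < m \<longrightarrow> idx j < idx (j + 1)) \<and>
        (\<forall>j<m. idx j < length w) \<and>
        (\<forall>j. j + 1 < m \<and> j \<notin> D \<longrightarrow> idx (j + 1) = idx j + 1) \<and>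
        (\<forall>a<m. \<forall>b<m. w ! idx a < w ! idx b \<longleftrightarrow> sig ! a < sig ! b))"

definition avoids :: "nat list \<Rightarrow> gpattern \<Rightarrow> bool" where
  "avoids w p = (\<not> contains w p)"

definition alpha :: "nat \<Rightarrow> gpattern \<Rightarrow> nat" where
  "alpha n p = card {w \<in> perms n. avoids w p}"

definition egf :: "gpattern \<Rightarrow> real fps" where
  "egf p = Abs_fps (\<lambda>n. of_nat (alpha n p) / fact n)"

definition pat12 :: "nat list \<Rightarrow> gpattern" where
  "pat12 sig = ([1, 2] @ map (\<lambda>x. x + 2) sig, {1})"

definition pat21 :: "nat list \<Rightarrow> gpattern" where
  "pat21 sig = ([2, 1] @ map (\<lambda>x. x + 2) sig, {1})"

end

theory Submission
  imports Defs
begin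

text \<open>Call a position p of w small if some occurrence of sigma starting after p lies entirely
  above w_p. Group the small positions p according to the predicate "an occurrence of sigma
  starting at or after p+1 lies above v", and reverse the relative order of the values within
  each group. This map is an involution on permutations: the last occurrence of sigma above a
  value contains no small position, so the map preserves the predicate, hence the small positions
  and their groups. An occurrence of 12-sigma or 21-sigma consists of two adjacent small positions
  of the same group followed by an occurrence of sigma above both; the map fixes the latter and
  reverses the order of the former. So it maps avoiders of 12-sigma onto avoiders of 21-sigma.\<close>

definition order_reverse :: "'a::linorder set \<Rightarrow> 'a \<Rightarrow> 'a" where
  "order_reverse C x =
     sorted_list_of_set C ! (card C - 1 - (LEAST i. sorted_list_of_set C ! i = x))"

lemma order_reverse_nth:
  assumes "finite C" "i < card C"
  shows "order_reverse C (sorted_list_of_set C ! i) = sorted_list_of_set C ! (card C - 1 - i)"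
proof -
  let ?L = "sorted_list_of_set C"
  have "(LEAST j. ?L ! j = ?L ! i) = i"
  proof (rule Least_equality)
    fix j assume "?L ! j = ?L ! i"
    then show "i \<le> j"
      using assms nth_eq_iff_index_eq[of ?L j i] by (cases "j < i") auto
  qed simp
  then show ?thesis by (simp add: order_reverse_def)
qed

lemma sorted_list_of_set_index:
  assumes "finite C" "x \<in> C"
  obtains i where "i < card C" "x = sorted_list_of_set C ! i"
  using assms by (metis in_set_conv_nth length_sorted_list_of_set set_sorted_list_of_set)

lemma order_reverse_in:
  assumes "finite C" "x \<in> C"
  shows "order_reverse C x \<in> C"
proof -
  obtain i where "i < card C" "x = sorted_list_of_set C ! i"
    using assms by (rule sorted_list_of_set_index)
  moreover have "sorted_list_of_set C ! (card C - 1 - i) \<in> set (sorted_list_of_set C)"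
    using \<open>i < card C\<close> by (intro nth_mem) simp
  ultimately show ?thesis
    using assms by (simp add: order_reverse_nth)
qed

lemma order_reverse_involution:
  assumes "finite C" "x \<in> C"
  shows "order_reverse C (order_reverse C x) = x"
proof -
  obtain i where "i < card C" "x = sorted_list_of_set C ! i"
    using assms by (rule sorted_list_of_set_index)
  then show ?thesis
    using assms by (simp add: order_reverse_nth)
qed

lemma order_reverse_image:
  assumes "finite C"
  shows "order_reverse C ` C = C"
proof
  show "order_reverse C ` C \<subseteq> C"
    using assms order_reverse_in by blast
  show "C \<subseteq> order_reverse C ` C"
    using assms order_reverse_in order_reverse_involution by (metis image_eqI subsetI)
qed

lemma order_reverse_less_iff:
  assumes "finite C" "x \<in> C" "y \<in> C"
  shows "order_reverse C x < order_reverse C y \<longleftrightarrow> y < x"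
proof -
  let ?L = "sorted_list_of_set C"
  have less_iff: "?L ! i < ?L ! j \<longleftrightarrow> i < j" if "i < card C" "j < card C" for i j
    using that sorted_wrt_nth_less[OF strict_sorted_list_of_set[of C]]
    by (cases i j rule: linorder_cases) (auto dest: less_not_sym)
  obtain i where "i < card C" "x = ?L ! i"
    using assms(1,2) by (rule sorted_list_of_set_index)
  moreover obtain j where "j < card C" "y = ?L ! j"
    using assms(1,3) by (rule sorted_list_of_set_index)
  ultimately show ?thesis
    using assms(1) by (simp add: order_reverse_nth less_iff) arith
qed

definition occurs_at :: "nat list \<Rightarrow> nat list \<Rightarrow> nat \<Rightarrow> bool" where
  "occurs_at sig w s \<longleftrightarrow> s + length sig \<le> length w \<and>
     (\<forall>a<length sig. \<forall>b<length sig. w ! (s + a) < w ! (s + b) \<longleftrightarrow> sig ! a < sig ! b)"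

definition occ_above :: "nat list \<Rightarrow> nat list \<Rightarrow> nat \<Rightarrow> nat \<Rightarrow> bool" where
  "occ_above sig w j v \<longleftrightarrow>
     (\<exists>s\<ge>j. occurs_at sig w s \<and> (\<forall>a<length sig. v < w ! (s + a)))"

definition small_pos :: "nat list \<Rightarrow> nat list \<Rightarrow> nat \<Rightarrow> bool" where
  "small_pos sig w p \<longleftrightarrow> occ_above sig w (Suc p) (w ! p)"

definition small_class :: "nat list \<Rightarrow> nat list \<Rightarrow> nat \<Rightarrow> nat set" where
  "small_class sig w p = (\<lambda>q. w ! q) `
     {q. q < length w \<and> small_pos sig w q \<and> occ_above sig w (Suc q) = occ_above sig w (Suc p)}"

definition flip :: "nat list \<Rightarrow> nat list \<Rightarrow> nat list" where
  "flip sig w = map (\<lambda>p. if small_pos sig w p then order_reverse (small_class sig w p) (w ! p)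
                          else w ! p) [0..<length w]"

lemma occurs_at_cong:
  assumes "length w' = length w" "\<And>a. a < length sig \<Longrightarrow> w' ! (s + a) = w ! (s + a)"
  shows "occurs_at sig w' s \<longleftrightarrow> occurs_at sig w s"
  using assms by (simp add: occurs_at_def)

lemma occ_above_mono: "occ_above sig w j v \<Longrightarrow> j' \<le> j \<Longrightarrow> v' \<le> v \<Longrightarrow> occ_above sig w j' v'"
  unfolding occ_above_def by (meson le_trans le_less_trans)

lemma occ_above_le_length: "occ_above sig w j v \<Longrightarrow> j \<le> length w"
  unfolding occ_above_def occurs_at_def by auto

lemma occ_above_eq_Suc_if_small:
  assumes "sig \<noteq> []" "small_pos sig w p"
  shows "occ_above sig w p = occ_above sig w (Suc p)"
proof (intro ext iffI)
  fix v assume "occ_above sig w p v"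
  then obtain s where s: "p \<le> s" "occurs_at sig w s" "\<forall>a<length sig. v < w ! (s + a)"
    unfolding occ_above_def by blast
  show "occ_above sig w (Suc p) v"
  proof (cases "s = p")
    case True
    then have "v \<le> w ! p" using s(3) assms(1) by fastforce
    with assms(2) show ?thesis
      unfolding small_pos_def using occ_above_mono[of sig w "Suc p" "w ! p"] by blast
  next
    case False
    with s show ?thesis unfolding occ_above_def by (auto intro: exI[of _ s])
  qed
next
  fix v assume "occ_above sig w (Suc p) v"
  then show "occ_above sig w p v" by (rule occ_above_mono) simp_all
qed

lemma occ_above_obtain_last:
  assumes "occ_above sig w j v"
  obtains s where "j \<le> s" "occurs_at sig w s" "\<forall>a<length sig. v < w ! (s + a)"
    "\<forall>a<length sig. \<not> small_pos sig w (s + a)"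
proof -
  let ?P = "\<lambda>s. j \<le> s \<and> occurs_at sig w s \<and> (\<forall>a<length sig. v < w ! (s + a))"
  have bound: "s \<le> length w" if "?P s" for s
    using that by (simp add: occurs_at_def)
  define s where "s = Greatest ?P"
  have "\<exists>s. ?P s"
    using assms unfolding occ_above_def by blast
  then have Ps: "?P s"
    unfolding s_def using bound by (rule GreatestI_ex_nat)
  have "\<not> small_pos sig w (s + a)" if a: "a < length sig" for a
  proof
    assume "small_pos sig w (s + a)"
    then obtain t where t: "Suc (s + a) \<le> t" "occurs_at sig w t"
      "\<forall>b<length sig. w ! (s + a) < w ! (t + b)"
      unfolding small_pos_def occ_above_def by blast
    have "v < w ! (t + b)" if "b < length sig" for b
      using Ps a t(3) that by (meson less_trans)
    moreover have "j \<le> t"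
      using Ps t(1) by linarith
    ultimately have "?P t"
      using t(2) by blast
    then have "t \<le> s"
      unfolding s_def using bound by (rule Greatest_le_nat)
    with t(1) show False by simp
  qed
  with Ps that show ?thesis by blast
qed

lemma length_flip [simp]: "length (flip sig w) = length w"
  by (simp add: flip_def)

lemma nth_flip:
  "p < length w \<Longrightarrow> flip sig w ! p =
     (if small_pos sig w p then order_reverse (small_class sig w p) (w ! p) else w ! p)"
  by (simp add: flip_def)

lemma finite_small_class: "finite (small_class sig w p)"
  unfolding small_class_def by (rule finite_imageI) (rule finite_subset[of _ "{..<length w}"], auto)

lemma nth_in_small_class: "p < length w \<Longrightarrow> small_pos sig w p \<Longrightarrow> w ! p \<in> small_class sig w p"
  unfolding small_class_def by auto

lemma occ_above_small_class: "v \<in> small_class sig w p \<Longrightarrow> occ_above sig w (Suc p) v"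
  unfolding small_class_def small_pos_def by auto

lemma small_class_subset: "small_class sig w p \<subseteq> set w"
  unfolding small_class_def by auto

lemma small_class_cong:
  "occ_above sig w (Suc q) = occ_above sig w (Suc p) \<Longrightarrow> small_class sig w q = small_class sig w p"
  unfolding small_class_def by simp

lemma flip_in_small_class:
  "p < length w \<Longrightarrow> small_pos sig w p \<Longrightarrow> flip sig w ! p \<in> small_class sig w p"
  by (simp add: nth_flip order_reverse_in finite_small_class nth_in_small_class)

lemma occ_above_flip: "occ_above sig (flip sig w) = occ_above sig w"
proof (intro ext iffI)
  fix j v
  assume "occ_above sig w j v"
  then obtain s where s: "j \<le> s" "occurs_at sig w s" "\<forall>a<length sig. v < w ! (s + a)"
    and unflipped: "\<forall>a<length sig. \<not> small_pos sig w (s + a)"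
    by (rule occ_above_obtain_last)
  have same: "flip sig w ! (s + a) = w ! (s + a)" if "a < length sig" for a
    using that s(2) unflipped by (simp add: nth_flip occurs_at_def)
  then show "occ_above sig (flip sig w) j v"
    unfolding occ_above_def using s occurs_at_cong[OF length_flip same] by auto
next
  fix j v
  assume "occ_above sig (flip sig w) j v"
  then obtain s where s: "j \<le> s" "occurs_at sig (flip sig w) s"
    "\<forall>a<length sig. v < flip sig w ! (s + a)"
    unfolding occ_above_def by blast
  show "occ_above sig w j v"
  proof (cases "\<exists>a<length sig. small_pos sig w (s + a)")
    case True
    then obtain a where a: "a < length sig" "small_pos sig w (s + a)" by blast
    then have "s + a < length w"
      using s(2) by (simp add: occurs_at_def)
    then have "occ_above sig w (Suc (s + a)) (flip sig w ! (s + a))"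
      using a(2) flip_in_small_class occ_above_small_class by blast
    moreover have "v \<le> flip sig w ! (s + a)"
      using s(3) a(1) by (simp add: less_imp_le)
    ultimately show ?thesis
      using s(1) occ_above_mono by (metis le_SucI le_add1 le_trans)
  next
    case False
    then have same: "flip sig w ! (s + a) = w ! (s + a)" if "a < length sig" for a
      using that s(2) by (simp add: nth_flip occurs_at_def)
    then show ?thesis
      unfolding occ_above_def using s occurs_at_cong[OF length_flip same] by auto
  qed
qed

lemma small_pos_flip:
  assumes "p < length w"
  shows "small_pos sig (flip sig w) p \<longleftrightarrow> small_pos sig w p"
proof (cases "small_pos sig w p")
  case True
  then show ?thesis
    using assms flip_in_small_class occ_above_small_class
    by (simp add: small_pos_def occ_above_flip)
next
  case False
  then show ?thesis
    using assms by (simp add: small_pos_def occ_above_flip nth_flip)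
qed

lemma small_class_flip:
  assumes "p < length w" "small_pos sig w p"
  shows "small_class sig (flip sig w) p = small_class sig w p"
proof -
  let ?C = "small_class sig w p"
  define Q where
    "Q = {q. q < length w \<and> small_pos sig w q \<and> occ_above sig w (Suc q) = occ_above sig w (Suc p)}"
  have "small_class sig (flip sig w) p = (\<lambda>q. flip sig w ! q) ` Q"
    unfolding small_class_def Q_def occ_above_flip using small_pos_flip by auto
  also have "\<dots> = order_reverse ?C ` ((\<lambda>q. w ! q) ` Q)"
    unfolding image_image by (rule image_cong) (auto simp: Q_def nth_flip dest: small_class_cong)
  also have "\<dots> = ?C"
    unfolding Q_def small_class_def[symmetric] by (rule order_reverse_image[OF finite_small_class])
  finally show ?thesis .
qed

lemma flip_flip: "flip sig (flip sig w) = w"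
proof (rule nth_equalityI)
  fix p assume "p < length (flip sig (flip sig w))"
  then have p: "p < length w" by simp
  show "flip sig (flip sig w) ! p = w ! p"
    using p small_pos_flip[OF p] small_class_flip[OF p]
    by (simp add: nth_flip order_reverse_involution finite_small_class nth_in_small_class)
qed simp

lemma set_flip_subset: "set (flip sig w) \<subseteq> set w"
proof
  fix x assume "x \<in> set (flip sig w)"
  then obtain p where p: "p < length w" "x = flip sig w ! p"
    by (auto simp: in_set_conv_nth)
  show "x \<in> set w"
  proof (cases "small_pos sig w p")
    case True
    then show ?thesis using p flip_in_small_class small_class_subset by blast
  next
    case False
    then show ?thesis using p by (simp add: nth_flip)
  qed
qed

lemma flip_perms:
  assumes "w \<in> perms n"
  shows "flip sig w \<in> perms n"
proof -
  have "set w \<subseteq> set (flip sig w)"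
    using set_flip_subset[of sig "flip sig w"] by (simp add: flip_flip)
  then have set_eq: "set (flip sig w) = {1..n}"
    using set_flip_subset[of sig w] assms by (auto simp: perms_def)
  have "length w = n"
    using assms distinct_card[of w] by (auto simp: perms_def)
  then have "distinct (flip sig w)"
    using set_eq by (intro card_distinct) simp
  then show ?thesis
    using set_eq by (simp add: perms_def)
qed

definition gapped_index :: "nat \<Rightarrow> nat \<Rightarrow> nat \<Rightarrow> nat" where
  "gapped_index i s a = (if a = 0 then i else if a = 1 then Suc i else s + (a - 2))"

lemma gapped_index_simps [simp]:
  "gapped_index i s 0 = i" "gapped_index i s (Suc 0) = Suc i" "gapped_index i s (Suc (Suc c)) = s + c"
  by (simp_all add: gapped_index_def)

lemma contains_gapped_iff:
  assumes "2 < length P"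
  shows "contains w (P, {1}) \<longleftrightarrow>
    (\<exists>i s. Suc (Suc i) \<le> s \<and> s + (length P - 2) \<le> length w \<and>
       (\<forall>a<length P. \<forall>b<length P.
          w ! gapped_index i s a < w ! gapped_index i s b \<longleftrightarrow> P ! a < P ! b))"
  (is "_ \<longleftrightarrow> (\<exists>i s. ?R i s)")
proof
  assume "contains w (P, {1})"
  then obtain idx where
    incr: "\<forall>j. j + 1 < length P \<longrightarrow> idx j < idx (j + 1)" and
    bound: "\<forall>j<length P. idx j < length w" and
    adj: "\<forall>j. j + 1 < length P \<and> j \<notin> {1} \<longrightarrow> idx (j + 1) = idx j + 1" and
    iso: "\<forall>a<length P. \<forall>b<length P. w ! idx a < w ! idx b \<longleftrightarrow> P ! a < P ! b"
    unfolding contains_def Let_def by auto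
  have idx_eq: "idx a = gapped_index (idx 0) (idx 2) a" if "a < length P" for a
    using that
  proof (induction a)
    case (Suc a)
    then show ?case
      using adj by (cases "a = 0 \<or> a = 1") (auto simp: gapped_index_def numeral_2_eq_2)
  qed (simp add: gapped_index_def)
  have "Suc (Suc (idx 0)) \<le> idx 2"
    using incr idx_eq[of 1] assms by (force simp: gapped_index_def numeral_2_eq_2)
  moreover have "idx 2 + (length P - 2) \<le> length w"
  proof -
    have "idx (length P - 1) = idx 2 + (length P - 1 - 2)"
      using idx_eq[of "length P - 1"] assms by (auto simp: gapped_index_def)
    moreover have "idx (length P - 1) < length w"
      using bound assms by simp
    ultimately show ?thesis
      using assms by linarith
  qed
  ultimately have "?R (idx 0) (idx 2)"
    using iso idx_eq by simp
  then show "\<exists>i s. ?R i s" by blast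
next
  assume "\<exists>i s. ?R i s"
  then obtain i s where "?R i s" by blast
  then show "contains w (P, {1})"
    unfolding contains_def Let_def fst_conv snd_conv
    by (intro exI[of _ "gapped_index i s"]) (auto simp: gapped_index_def)
qed

lemma gapped_order_iso_iff:
  assumes "a \<le> 2" "b \<le> 2" "0 \<notin> set sig" "s + length sig \<le> length w"
  shows "(\<forall>x<length sig + 2. \<forall>y<length sig + 2.
            w ! gapped_index i s x < w ! gapped_index i s y \<longleftrightarrow>
            ([a, b] @ map (\<lambda>x. x + 2) sig) ! x < ([a, b] @ map (\<lambda>x. x + 2) sig) ! y) \<longleftrightarrow>
         (w ! i < w ! Suc i \<longleftrightarrow> a < b) \<and> (w ! Suc i < w ! i \<longleftrightarrow> b < a) \<and> occurs_at sig w s \<and>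
         (\<forall>c<length sig. max (w ! i) (w ! Suc i) < w ! (s + c))"
  (is "(\<forall>x<_. \<forall>y<_. ?W x < ?W y \<longleftrightarrow> ?P ! x < ?P ! y) \<longleftrightarrow> ?R")
proof -
  have P: "?P ! 0 = a" "?P ! Suc 0 = b" "c < length sig \<Longrightarrow> ?P ! Suc (Suc c) = sig ! c + 2" for c
    by (simp_all add: nth_append)
  have above: "a < Suc (Suc (sig ! c))" "b < Suc (Suc (sig ! c))" if "c < length sig" for c
  proof -
    have "sig ! c \<noteq> 0"
      using assms(3) nth_mem[OF that] by metis
    then show "a < Suc (Suc (sig ! c))" "b < Suc (Suc (sig ! c))"
      using assms(1,2) by simp_all
  qed
  have cases: "x = 0 \<or> x = 1 \<or> (\<exists>c. x = c + 2 \<and> c < length sig)" if "x < length sig + 2" for x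
    using that by presburger
  show ?thesis
  proof
    assume iso: "\<forall>x<length sig + 2. \<forall>y<length sig + 2. ?W x < ?W y \<longleftrightarrow> ?P ! x < ?P ! y"
    have "w ! i < w ! Suc i \<longleftrightarrow> a < b" "w ! Suc i < w ! i \<longleftrightarrow> b < a"
      using iso[rule_format, of 0 1] iso[rule_format, of 1 0] by (simp_all add: P)
    moreover have "occurs_at sig w s"
      unfolding occurs_at_def
      using assms(4) iso[rule_format, of "_ + 2" "_ + 2"] by (simp add: P)
    moreover have "max (w ! i) (w ! Suc i) < w ! (s + c)" if "c < length sig" for c
      using that above[OF that] iso[rule_format, of 0 "c + 2"] iso[rule_format, of 1 "c + 2"]
      by (simp add: P)
    ultimately show ?R by blast
  next
    assume ?R
    then have o1: "w ! i < w ! Suc i \<longleftrightarrow> a < b" and o2: "w ! Suc i < w ! i \<longleftrightarrow> b < a"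
      and occ: "\<And>c d. c < length sig \<Longrightarrow> d < length sig \<Longrightarrow>
                  w ! (s + c) < w ! (s + d) \<longleftrightarrow> sig ! c < sig ! d"
      and low: "\<And>c. c < length sig \<Longrightarrow> w ! i < w ! (s + c) \<and> w ! Suc i < w ! (s + c)"
      unfolding occurs_at_def by auto
    have high: "\<not> w ! (s + c) < w ! i" "\<not> w ! (s + c) < w ! Suc i"
      "\<not> Suc (Suc (sig ! c)) < a" "\<not> Suc (Suc (sig ! c)) < b" if "c < length sig" for c
      using low[OF that] above[OF that] by simp_all
    show "\<forall>x<length sig + 2. \<forall>y<length sig + 2. ?W x < ?W y \<longleftrightarrow> ?P ! x < ?P ! y"
    proof (intro allI impI)
      fix x y assume "x < length sig + 2" "y < length sig + 2"
      from cases[OF this(1)] cases[OF this(2)] show "?W x < ?W y \<longleftrightarrow> ?P ! x < ?P ! y"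
        by (elim disjE exE conjE) (simp_all add: P o1 o2 occ low high above)
    qed
  qed
qed

lemma contains_pattern_iff:
  assumes "sig \<noteq> []" "0 \<notin> set sig" "a \<le> 2" "b \<le> 2"
  shows "contains w ([a, b] @ map (\<lambda>x. x + 2) sig, {1}) \<longleftrightarrow>
    (\<exists>i. (w ! i < w ! Suc i \<longleftrightarrow> a < b) \<and> (w ! Suc i < w ! i \<longleftrightarrow> b < a) \<and>
         occ_above sig w (Suc (Suc i)) (max (w ! i) (w ! Suc i)))"
proof -
  have len: "length ([a, b] @ map (\<lambda>x. x + 2) sig) = length sig + 2" by simp
  have "2 < length ([a, b] @ map (\<lambda>x. x + 2) sig)"
    using assms(1) by simp
  note gapped = contains_gapped_iff[OF this, unfolded len add_diff_cancel_right']
  have "contains w ([a, b] @ map (\<lambda>x. x + 2) sig, {1}) \<longleftrightarrow>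
    (\<exists>i s. Suc (Suc i) \<le> s \<and> s + length sig \<le> length w \<and>
       (w ! i < w ! Suc i \<longleftrightarrow> a < b) \<and> (w ! Suc i < w ! i \<longleftrightarrow> b < a) \<and> occurs_at sig w s \<and>
       (\<forall>c<length sig. max (w ! i) (w ! Suc i) < w ! (s + c)))"
    unfolding gapped by (simp only: gapped_order_iso_iff[OF assms(3,4,2)] cong: conj_cong)
  also have "\<dots> \<longleftrightarrow> (\<exists>i. (w ! i < w ! Suc i \<longleftrightarrow> a < b) \<and> (w ! Suc i < w ! i \<longleftrightarrow> b < a) \<and>
      occ_above sig w (Suc (Suc i)) (max (w ! i) (w ! Suc i)))"
    unfolding occ_above_def occurs_at_def by blast
  finally show ?thesis .
qed

lemma flip_adjacent_reversed:
  assumes "sig \<noteq> []"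
    and above: "occ_above sig w (Suc (Suc i)) (max (flip sig w ! i) (flip sig w ! Suc i))"
  shows "occ_above sig w (Suc (Suc i)) (max (w ! i) (w ! Suc i))"
    and "flip sig w ! i < flip sig w ! Suc i \<longleftrightarrow> w ! Suc i < w ! i"
    and "flip sig w ! Suc i < flip sig w ! i \<longleftrightarrow> w ! i < w ! Suc i"
proof -
  have i: "Suc i < length w"
    using occ_above_le_length[OF above] by simp
  have "small_pos sig (flip sig w) i" "small_pos sig (flip sig w) (Suc i)"
    unfolding small_pos_def occ_above_flip using above by (auto elim!: occ_above_mono)
  then have small: "small_pos sig w i" "small_pos sig w (Suc i)"
    using i small_pos_flip by simp_all
  let ?C = "small_class sig w (Suc i)"
  have "small_class sig w i = ?C"
    using occ_above_eq_Suc_if_small[OF assms(1) small(2)] by (rule small_class_cong)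
  then have in_C: "w ! i \<in> ?C" "w ! Suc i \<in> ?C"
    using i small nth_in_small_class by (metis Suc_lessD)+
  then show "occ_above sig w (Suc (Suc i)) (max (w ! i) (w ! Suc i))"
    using occ_above_small_class by (simp add: max_def)
  have "flip sig w ! i = order_reverse ?C (w ! i)" "flip sig w ! Suc i = order_reverse ?C (w ! Suc i)"
    using i small \<open>small_class sig w i = ?C\<close> by (simp_all add: nth_flip)
  then show "flip sig w ! i < flip sig w ! Suc i \<longleftrightarrow> w ! Suc i < w ! i"
    and "flip sig w ! Suc i < flip sig w ! i \<longleftrightarrow> w ! i < w ! Suc i"
    using order_reverse_less_iff[OF finite_small_class] in_C by simp_all
qed

lemma contains_flip_swap:
  assumes "sig \<noteq> []" "0 \<notin> set sig" "a \<le> 2" "b \<le> 2"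
    and "contains (flip sig w) ([a, b] @ map (\<lambda>x. x + 2) sig, {1})"
  shows "contains w ([b, a] @ map (\<lambda>x. x + 2) sig, {1})"
proof -
  obtain i where
    "flip sig w ! i < flip sig w ! Suc i \<longleftrightarrow> a < b"
    "flip sig w ! Suc i < flip sig w ! i \<longleftrightarrow> b < a"
    "occ_above sig w (Suc (Suc i)) (max (flip sig w ! i) (flip sig w ! Suc i))"
    using assms(5) contains_pattern_iff[OF assms(1-4)] occ_above_flip by metis
  then show ?thesis
    using contains_pattern_iff[OF assms(1,2,4,3)] flip_adjacent_reversed[OF assms(1)] by metis
qed

lemma alpha_pat12_eq_pat21:
  assumes "sig \<noteq> []" "0 \<notin> set sig"
  shows "alpha n (pat12 sig) = alpha n (pat21 sig)"
proof -
  have swap12: "contains (flip sig w) (pat12 sig) \<longleftrightarrow> contains w (pat21 sig)" for w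
    using contains_flip_swap[OF assms, of 1 2 w] contains_flip_swap[OF assms, of 2 1 "flip sig w"]
    unfolding pat12_def pat21_def flip_flip by auto
  have swap21: "contains (flip sig w) (pat21 sig) \<longleftrightarrow> contains w (pat12 sig)" for w
    using swap12[of "flip sig w"] unfolding flip_flip by simp
  have "bij_betw (flip sig) {w \<in> perms n. avoids w (pat12 sig)} {w \<in> perms n. avoids w (pat21 sig)}"
    by (rule bij_betw_byWitness[where f' = "flip sig"])
      (auto simp: avoids_def flip_flip flip_perms swap12 swap21)
  then show ?thesis
    unfolding alpha_def by (rule bij_betw_same_card)
qed

theorem mainTheorem8:
  fixes sig :: "nat list" and k :: nat
  assumes "k \<ge> 1" and "sig \<in> perms k"
  shows "egf (pat12 sig) = egf (pat21 sig)"
proof -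
  have "sig \<noteq> []" "0 \<notin> set sig"
    using assms by (auto simp: perms_def)
  then show ?thesis
    unfolding egf_def using alpha_pat12_eq_pat21 by simp
qed

end
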